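(* Let $A\in\mathbb{R}^{n\times n}$ and consider $x_{k+1}=Ax_k$ on $\mathbb{R}^n$. Let $\xi\in\mathbb{R}^n$ and suppose that for every bounded set $P\subseteq\mathbb{R}^n$ there exists a positive integer $k$ with $A^k\xi\notin P$. Then $\lim_{k\to\infty}\|A^k\xi\|_2=\infty$; that is, for every bounded set $P\subseteq\mathbb{R}^n$ there exists $K\in\mathbb{Z}^+$ such that $A^k\xi\notin P$ for all $k\ge K$. *)

theory Defs
  imports "HOL-Analysis.Analysis"
begin

primrec matpow :: "real^'n^'n \<Rightarrow> nat \<Rightarrow> real^'n^'n" where
  "matpow A 0 = mat 1"
| "matpow A (Suc k) = A ** matpow A k"

end

(*
  The orbit x_k = A^k xi satisfies a linear recurrence, because x_0, ..., x_n are linearly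
  dependent; hence so does each coordinate, viewed as a complex sequence. Factoring the
  characteristic polynomial into linear factors X - l and peeling them off one at a time shows
  that a solution of such a recurrence is either marginally stable (a finite sum of terms
  a nu^k with |nu| = 1 plus an exponentially decaying remainder, hence bounded) or its maxima
  over sliding windows of fixed length tend to infinity. The heart of the induction is the
  first-order equation y_(k+1) = l y_k + z_k with z marginally stable: its solutions are
  marginally stable up to a resonant term c k l^k with |l| = 1 or a growing term d l^k with
  |l| > 1. An unbounded orbit has an unbounded coordinate, which must therefore fall in the
  second case, and since x_(k+j) = A^j x_k with j ranging over a bounded window, the norm of
  x_k tends to infinity.
*)

theory Submission
  imports Defs "HOL-Computational_Algebra.Fundamental_Theorem_Algebra"
begin

section \<open>Exponentially decaying sequences\<close>

definition exp_decay :: "(nat \<Rightarrow> 'a::real_normed_vector) \<Rightarrow> bool" where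
  "exp_decay r \<longleftrightarrow> (\<exists>C \<theta>. 0 \<le> \<theta> \<and> \<theta> < 1 \<and> (\<forall>k. norm (r k) \<le> C * \<theta>^k))"

lemma exp_decayE:
  assumes "exp_decay r"
  obtains C \<theta> where "0 \<le> C" "0 \<le> \<theta>" "\<theta> < 1" "\<And>k. norm (r k) \<le> C * \<theta>^k"
proof -
  obtain C \<theta> where "0 \<le> \<theta>" "\<theta> < 1" and r: "\<And>k. norm (r k) \<le> C * \<theta>^k"
    using assms unfolding exp_decay_def by blast
  moreover have "0 \<le> C" using order_trans[OF norm_ge_zero r[of 0]] by simp
  ultimately show thesis using that by blast
qed

lemma exp_decay_bounded:
  assumes "exp_decay r"
  shows "bounded (range r)"
proof -
  obtain C \<theta> where "0 \<le> C" "0 \<le> \<theta>" "\<theta> < 1" and r: "\<And>k. norm (r k) \<le> C * \<theta>^k"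
    using exp_decayE[OF assms] by blast
  then have "C * \<theta>^k \<le> C" for k
    by (simp add: mult_left_le power_le_one)
  then show ?thesis using r by (metis bounded_iff order_trans rangeE)
qed

lemma exp_decay_add:
  assumes "exp_decay r" "exp_decay s"
  shows "exp_decay (\<lambda>k. r k + s k)"
proof -
  obtain C \<theta> where "0 \<le> C" "0 \<le> \<theta>" "\<theta> < 1" and r: "\<And>k. norm (r k) \<le> C * \<theta>^k"
    using exp_decayE[OF assms(1)] by blast
  obtain D \<eta> where "0 \<le> D" "0 \<le> \<eta>" "\<eta> < 1" and s: "\<And>k. norm (s k) \<le> D * \<eta>^k"
    using exp_decayE[OF assms(2)] by blast
  define \<mu> where "\<mu> = max \<theta> \<eta>"
  have "norm (r k + s k) \<le> (C + D) * \<mu>^k" for k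
  proof -
    have "C * \<theta>^k \<le> C * \<mu>^k" "D * \<eta>^k \<le> D * \<mu>^k"
      using \<open>0 \<le> C\<close> \<open>0 \<le> D\<close> \<open>0 \<le> \<theta>\<close> \<open>0 \<le> \<eta>\<close>
      by (auto simp: \<mu>_def intro!: mult_left_mono power_mono)
    then show ?thesis
      using r[of k] s[of k] norm_triangle_ineq[of "r k" "s k"] by (simp add: distrib_right)
  qed
  moreover have "0 \<le> \<mu>" "\<mu> < 1" using \<open>0 \<le> \<theta>\<close> \<open>\<theta> < 1\<close> \<open>\<eta> < 1\<close> by (auto simp: \<mu>_def)
  ultimately show ?thesis unfolding exp_decay_def by blast
qed

lemma exp_decay_geometric:
  fixes l :: "'a::real_normed_div_algebra"
  assumes "norm l < 1"
  shows "exp_decay (\<lambda>k. c * l^k)"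
  unfolding exp_decay_def using assms
  by (intro exI[of _ "norm c"] exI[of _ "norm l"]) (simp add: norm_mult norm_power)

lemma exp_decay_stable_first_order:
  fixes l :: complex
  assumes rec: "\<And>k. y (Suc k) = l * y k + r k" and l: "cmod l < 1" and "exp_decay r"
  shows "exp_decay y"
proof -
  obtain C \<theta> where "0 \<le> C" "0 \<le> \<theta>" "\<theta> < 1" and r: "\<And>k. cmod (r k) \<le> C * \<theta>^k"
    using exp_decayE[OF \<open>exp_decay r\<close>] by blast
  define \<beta> where "\<beta> = (1 + max \<theta> (cmod l)) / 2"
  have \<beta>: "cmod l < \<beta>" "\<theta> \<le> \<beta>" "\<beta> < 1"
    using l \<open>\<theta> < 1\<close> by (auto simp: \<beta>_def)
  define D where "D = cmod (y 0) + C / (\<beta> - cmod l)"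
  have "(\<beta> - cmod l) * D = (\<beta> - cmod l) * cmod (y 0) + C"
    using \<beta> by (simp add: D_def distrib_left)
  then have CD: "cmod l * D + C \<le> \<beta> * D"
    using mult_right_mono[of "cmod l" \<beta> "cmod (y 0)"] \<beta> by (simp add: algebra_simps)
  have "cmod (y k) \<le> D * \<beta>^k" for k
  proof (induction k)
    case 0
    show ?case using \<beta> \<open>0 \<le> C\<close> by (simp add: D_def)
  next
    case (Suc k)
    have "cmod (y (Suc k)) \<le> cmod l * cmod (y k) + cmod (r k)"
      using rec norm_triangle_ineq[of "l * y k" "r k"] by (simp add: norm_mult)
    also have "\<dots> \<le> cmod l * (D * \<beta>^k) + C * \<beta>^k"
      using Suc.IH order_trans[OF r mult_left_mono[OF power_mono[OF \<beta>(2) \<open>0 \<le> \<theta>\<close>] \<open>0 \<le> C\<close>]]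
      by (intro add_mono mult_left_mono) auto
    also have "\<dots> \<le> D * \<beta>^Suc k"
      using mult_right_mono[OF CD, of "\<beta>^k"] \<beta> \<open>0 \<le> \<theta>\<close> by (simp add: algebra_simps)
    finally show ?case .
  qed
  then show ?thesis unfolding exp_decay_def using \<beta> \<open>0 \<le> \<theta>\<close> by (intro exI[of _ D] exI[of _ \<beta>]) auto
qed

lemma exp_decay_backward_solution:
  fixes l :: complex
  assumes l: "1 \<le> cmod l" and "exp_decay r"
  obtains \<rho> where "exp_decay \<rho>" "\<And>k. \<rho> (Suc k) = l * \<rho> k + r k"
proof -
  obtain C \<theta> where "0 \<le> \<theta>" "\<theta> < 1" and r: "\<And>k. cmod (r k) \<le> C * \<theta>^k"
    using exp_decayE[OF \<open>exp_decay r\<close>] by blast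
  have "l \<noteq> 0" using l by auto
  define \<rho> where "\<rho> k = - (\<Sum>j. r (k + j) / l ^ Suc j)" for k
  have bound: "cmod (r (k + j) / l ^ Suc j) \<le> C * \<theta>^k * \<theta>^j" for k j
  proof -
    have "cmod (r (k + j) / l ^ Suc j) = cmod (r (k + j)) / cmod l ^ Suc j"
      by (simp only: norm_divide norm_power)
    also have "\<dots> \<le> cmod (r (k + j))"
      using one_le_power[OF l, of "Suc j"] by (simp add: divide_le_eq mult_le_cancel_left1)
    also have "\<dots> \<le> C * \<theta>^k * \<theta>^j" using r[of "k + j"] by (simp add: power_add mult.assoc)
    finally show ?thesis .
  qed
  have geometric: "summable (\<lambda>j. C * \<theta>^k * \<theta>^j)" for k
    using \<open>0 \<le> \<theta>\<close> \<open>\<theta> < 1\<close> by (intro summable_mult summable_geometric) auto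
  have summable: "summable (\<lambda>j. r (k + j) / l ^ Suc j)" for k
    by (rule summable_comparison_test'[OF geometric[of k]]) (use bound in auto)
  have "\<rho> (Suc k) = l * \<rho> k + r k" for k
  proof -
    have scaled: "l * (\<Sum>j. r (k + j) / l ^ Suc j) = (\<Sum>j. r (k + j) / l ^ j)"
      using suminf_mult[OF summable[of k], of l, symmetric] \<open>l \<noteq> 0\<close> by simp
    have "summable (\<lambda>j. r (k + j) / l ^ j)"
      using summable_mult[OF summable[of k], of l] \<open>l \<noteq> 0\<close> by simp
    from suminf_split_head[OF this]
    have "(\<Sum>j. r (k + Suc j) / l ^ Suc j) = (\<Sum>j. r (k + j) / l ^ j) - r k" by simp
    with scaled show ?thesis by (simp add: \<rho>_def algebra_simps)
  qed
  moreover have "cmod (\<rho> k) \<le> C / (1 - \<theta>) * \<theta>^k" for k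
  proof -
    have "cmod (\<rho> k) \<le> (\<Sum>j. C * \<theta>^k * \<theta>^j)"
      unfolding \<rho>_def norm_minus_cancel by (rule norm_suminf_le[OF bound geometric])
    also have "\<dots> = C / (1 - \<theta>) * \<theta>^k"
      using \<open>0 \<le> \<theta>\<close> \<open>\<theta> < 1\<close> by (simp add: suminf_mult suminf_geometric)
    finally show ?thesis .
  qed
  then have "exp_decay \<rho>"
    unfolding exp_decay_def using \<open>0 \<le> \<theta>\<close> \<open>\<theta> < 1\<close> by blast
  ultimately show thesis using that by blast
qed

lemma exp_decay_forced_solution:
  fixes l :: complex
  assumes "exp_decay r"
  obtains \<rho> where "exp_decay \<rho>" "\<And>k. \<rho> (Suc k) = l * \<rho> k + r k"
proof (cases "cmod l < 1")
  case True
  define \<rho> where "\<rho> = rec_nat 0 (\<lambda>k v. l * v + r k)"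
  have "\<rho> (Suc k) = l * \<rho> k + r k" for k by (simp add: \<rho>_def)
  then show thesis using that exp_decay_stable_first_order[OF _ True assms] by blast
next
  case False
  then have "1 \<le> cmod l" by simp
  then show thesis using that by (rule exp_decay_backward_solution[OF _ assms])
qed

section \<open>Marginally stable sequences\<close>

definition marginally_stable :: "(nat \<Rightarrow> complex) \<Rightarrow> bool" where
  "marginally_stable y \<longleftrightarrow> (\<exists>F a r. finite F \<and> (\<forall>\<nu>\<in>F. cmod \<nu> = 1) \<and> exp_decay r \<and>
      (\<forall>k. y k = (\<Sum>\<nu>\<in>F. a \<nu> * \<nu>^k) + r k))"

lemma marginally_stable_bounded:
  assumes "marginally_stable y"
  shows "bounded (range y)"
proof -
  obtain F a r where F: "\<forall>\<nu>\<in>F. cmod \<nu> = 1" and "exp_decay r"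
    and y: "\<And>k. y k = (\<Sum>\<nu>\<in>F. a \<nu> * \<nu>^k) + r k"
    using assms unfolding marginally_stable_def by blast
  obtain B where B: "\<And>k. cmod (r k) \<le> B"
    using exp_decay_bounded[OF \<open>exp_decay r\<close>] by (auto simp: bounded_iff)
  have "cmod (y k) \<le> (\<Sum>\<nu>\<in>F. cmod (a \<nu>)) + B" for k
  proof -
    have "cmod (\<Sum>\<nu>\<in>F. a \<nu> * \<nu>^k) \<le> (\<Sum>\<nu>\<in>F. cmod (a \<nu>))"
      by (rule order_trans[OF norm_sum sum_mono]) (simp add: F norm_mult norm_power)
    then show ?thesis
      using y[of k] B[of k] norm_triangle_ineq[of "\<Sum>\<nu>\<in>F. a \<nu> * \<nu>^k" "r k"] by simp
  qed
  then show ?thesis by (auto simp: bounded_iff)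
qed

lemma marginally_stable_add:
  assumes "marginally_stable y" "marginally_stable z"
  shows "marginally_stable (\<lambda>k. y k + z k)"
proof -
  obtain F a r where F: "finite F" "\<forall>\<nu>\<in>F. cmod \<nu> = 1" "exp_decay r"
    and y: "\<And>k. y k = (\<Sum>\<nu>\<in>F. a \<nu> * \<nu>^k) + r k"
    using assms(1) unfolding marginally_stable_def by blast
  obtain G b s where G: "finite G" "\<forall>\<nu>\<in>G. cmod \<nu> = 1" "exp_decay s"
    and z: "\<And>k. z k = (\<Sum>\<nu>\<in>G. b \<nu> * \<nu>^k) + s k"
    using assms(2) unfolding marginally_stable_def by blast
  define c where "c \<nu> = (if \<nu> \<in> F then a \<nu> else 0) + (if \<nu> \<in> G then b \<nu> else 0)" for \<nu>
  have "(\<Sum>\<nu>\<in>F \<union> G. c \<nu> * \<nu>^k) = (\<Sum>\<nu>\<in>F. a \<nu> * \<nu>^k) + (\<Sum>\<nu>\<in>G. b \<nu> * \<nu>^k)" for k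
  proof -
    have "(\<Sum>\<nu>\<in>F \<union> G. c \<nu> * \<nu>^k) =
        (\<Sum>\<nu>\<in>F \<union> G. (if \<nu> \<in> F then a \<nu> * \<nu>^k else 0) + (if \<nu> \<in> G then b \<nu> * \<nu>^k else 0))"
      by (rule sum.cong) (auto simp: c_def algebra_simps)
    then show ?thesis
      using sum.inter_restrict[of "F \<union> G" "\<lambda>\<nu>. a \<nu> * \<nu>^k" F]
        sum.inter_restrict[of "F \<union> G" "\<lambda>\<nu>. b \<nu> * \<nu>^k" G] F(1) G(1)
      by (simp add: sum.distrib Int_absorb1)
  qed
  then have "\<forall>k. y k + z k = (\<Sum>\<nu>\<in>F \<union> G. c \<nu> * \<nu>^k) + (r k + s k)"
    using y z by (simp add: algebra_simps)
  then show ?thesis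
    unfolding marginally_stable_def using F G exp_decay_add[OF F(3) G(3)] by blast
qed

lemma exp_decay_imp_marginally_stable:
  assumes "exp_decay r"
  shows "marginally_stable r"
  unfolding marginally_stable_def using assms by (intro exI[of _ "{}"]) auto

lemma marginally_stable_geometric:
  assumes "cmod l \<le> 1"
  shows "marginally_stable (\<lambda>k. c * l^k)"
proof (cases "cmod l = 1")
  case True
  have "exp_decay (\<lambda>k. 0 :: complex)" using exp_decay_geometric[of 0 0] by simp
  then show ?thesis unfolding marginally_stable_def using True
    by (intro exI[of _ "{l}"] exI[of _ "\<lambda>_. c"] exI[of _ "\<lambda>_. 0"]) auto
next
  case False
  then show ?thesis
    using assms exp_decay_geometric exp_decay_imp_marginally_stable by force
qed

section \<open>First-order recurrences\<close>

lemma first_order_rec_difference: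
  fixes l :: "'a::comm_ring_1"
  assumes "\<And>k. y (Suc k) = l * y k + z k" "\<And>k. w (Suc k) = l * w k + z k"
  shows "y k = w k + (y 0 - w 0) * l^k"
proof (induction k)
  case (Suc k)
  then have "y (Suc k) = l * (w k + (y 0 - w 0) * l^k) + z k"
    using assms(1) by simp
  then show ?case using assms(2) by (simp add: algebra_simps)
qed simp

lemma marginally_stable_forced_solution:
  fixes l :: complex
  assumes "marginally_stable z"
  obtains c g where "marginally_stable g" "c \<noteq> 0 \<Longrightarrow> cmod l = 1"
    "\<And>k. c * of_nat (Suc k) * l ^ Suc k + g (Suc k) = l * (c * of_nat k * l^k + g k) + z k"
proof -
  obtain F a r where F: "finite F" "\<forall>\<nu>\<in>F. cmod \<nu> = 1" "exp_decay r"
    and z: "\<And>k. z k = (\<Sum>\<nu>\<in>F. a \<nu> * \<nu>^k) + r k"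
    using assms unfolding marginally_stable_def by blast
  obtain \<rho> where \<rho>: "exp_decay \<rho>" "\<And>k. \<rho> (Suc k) = l * \<rho> k + r k"
    using exp_decay_forced_solution[OF F(3)] by blast
  txt \<open>The modes \<open>\<nu> \<noteq> l\<close> are matched by \<open>a \<nu> / (\<nu> - l) * \<nu>^k\<close>,
    the resonant mode \<open>l\<close> by \<open>a l / l * k * l^k\<close>.\<close>
  define c where "c = (if l \<in> F then a l / l else 0)"
  define g where "g k = (\<Sum>\<nu>\<in>F - {l}. a \<nu> / (\<nu> - l) * \<nu>^k) + \<rho> k" for k
  show thesis
  proof (rule that)
    show "marginally_stable g"
      unfolding marginally_stable_def g_def using F \<rho>(1)
      by (intro exI[of _ "F - {l}"] exI[of _ "\<lambda>\<nu>. a \<nu> / (\<nu> - l)"] exI[of _ \<rho>]) auto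
    show "cmod l = 1" if "c \<noteq> 0" using that F(2) by (auto simp: c_def split: if_splits)
    fix k
    have "(\<Sum>\<nu>\<in>F - {l}. a \<nu> / (\<nu> - l) * \<nu> ^ Suc k) =
        (\<Sum>\<nu>\<in>F - {l}. l * (a \<nu> / (\<nu> - l) * \<nu>^k) + a \<nu> * \<nu>^k)"
      by (rule sum.cong) (auto simp: field_simps)
    then have nonresonant: "(\<Sum>\<nu>\<in>F - {l}. a \<nu> / (\<nu> - l) * \<nu> ^ Suc k) =
        l * (\<Sum>\<nu>\<in>F - {l}. a \<nu> / (\<nu> - l) * \<nu>^k) + (\<Sum>\<nu>\<in>F - {l}. a \<nu> * \<nu>^k)"
      by (simp add: sum.distrib sum_distrib_left)
    have resonant: "c * of_nat (Suc k) * l ^ Suc k =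
        l * (c * of_nat k * l^k) + (if l \<in> F then a l * l^k else 0)"
      using F(2) by (auto simp: c_def field_simps)
    have "(\<Sum>\<nu>\<in>F. a \<nu> * \<nu>^k) = (\<Sum>\<nu>\<in>F - {l}. a \<nu> * \<nu>^k) + (if l \<in> F then a l * l^k else 0)"
      using sum.remove[OF F(1), of l "\<lambda>\<nu>. a \<nu> * \<nu>^k"] by (simp add: Diff_insert_absorb)
    then show "c * of_nat (Suc k) * l ^ Suc k + g (Suc k) = l * (c * of_nat k * l^k + g k) + z k"
      using nonresonant resonant z[of k] \<rho>(2)[of k] by (simp add: g_def algebra_simps)
  qed
qed

lemma filterlim_norm_add_bounded:
  fixes f g :: "nat \<Rightarrow> 'a::real_normed_vector"
  assumes "filterlim (\<lambda>k. norm (f k)) at_top sequentially" "bounded (range g)"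
  shows "filterlim (\<lambda>k. norm (f k + g k)) at_top sequentially"
proof -
  obtain B where B: "\<And>k. norm (g k) \<le> B"
    using assms(2) by (auto simp: bounded_iff)
  have "filterlim (\<lambda>k. - B + norm (f k)) at_top sequentially"
    by (rule filterlim_tendsto_add_at_top[OF tendsto_const assms(1)])
  moreover have "- B + norm (f k) \<le> norm (f k + g k)" for k
    using norm_diff_ineq[of "f k" "g k"] B[of k] by linarith
  ultimately show ?thesis
    by (blast intro: filterlim_at_top_mono always_eventually)
qed

lemma first_order_dichotomy:
  fixes l :: complex
  assumes rec: "\<And>k. y (Suc k) = l * y k + z k" and "marginally_stable z"
  shows "marginally_stable y \<or> filterlim (\<lambda>k. cmod (y k)) at_top sequentially"
proof -
  obtain c g where g: "marginally_stable g" and c: "c \<noteq> 0 \<Longrightarrow> cmod l = 1"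
    and w: "\<And>k. c * of_nat (Suc k) * l ^ Suc k + g (Suc k) = l * (c * of_nat k * l^k + g k) + z k"
    using marginally_stable_forced_solution[OF assms(2)] by blast
  define d where "d = y 0 - g 0"
  have y: "y = (\<lambda>k. c * of_nat k * l^k + (g k + d * l^k))"
    using first_order_rec_difference[of y l z "\<lambda>k. c * of_nat k * l^k + g k", OF rec w]
    by (auto simp: d_def algebra_simps)
  consider (resonant) "c \<noteq> 0" | (stable) "c = 0" "cmod l \<le> 1" | (unstable) "c = 0" "1 < cmod l"
    by fastforce
  then show ?thesis
  proof cases
    case resonant
    then have "bounded (range (\<lambda>k. g k + d * l^k))"
      using c g by (simp add: marginally_stable_add marginally_stable_geometric marginally_stable_bounded)
    moreover have "filterlim (\<lambda>k. cmod c * real k) at_top sequentially"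
      using resonant by (intro filterlim_tendsto_pos_mult_at_top[OF tendsto_const _ filterlim_real_sequentially]) auto
    ultimately have "filterlim (\<lambda>k. cmod (c * of_nat k * l^k + (g k + d * l^k))) at_top sequentially"
      using c[OF resonant] by (intro filterlim_norm_add_bounded) (simp_all add: norm_mult norm_power)
    then show ?thesis by (simp add: y)
  next
    case stable
    then show ?thesis
      using g by (simp add: y marginally_stable_add marginally_stable_geometric)
  next
    case unstable
    show ?thesis
    proof (cases "d = 0")
      case True
      then show ?thesis using unstable g by (simp add: y)
    next
      case False
      have "filterlim (\<lambda>k. cmod (l^k)) at_top sequentially"
        using unstable by (intro filterlim_at_infinity_imp_norm_at_top filterlim_realpow_sequentially_gt1)
      then have "filterlim (\<lambda>k. cmod d * cmod (l^k)) at_top sequentially"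
        using False by (intro filterlim_tendsto_pos_mult_at_top[OF tendsto_const]) auto
      then have "filterlim (\<lambda>k. cmod (d * l^k + g k)) at_top sequentially"
        using g by (intro filterlim_norm_add_bounded) (simp_all add: norm_mult marginally_stable_bounded)
      then show ?thesis using unstable by (simp add: y add.commute)
    qed
  qed
qed

section \<open>Higher-order linear recurrences\<close>

lemma filterlim_at_top_scaled_bound:
  fixes f g :: "'a \<Rightarrow> real"
  assumes "filterlim f at_top F" "0 < M" "\<And>x. f x \<le> M * g x"
  shows "filterlim g at_top F"
proof -
  have "filterlim (\<lambda>x. inverse M * f x) at_top F"
    using assms(1,2) by (intro filterlim_tendsto_pos_mult_at_top[OF tendsto_const]) auto
  moreover have "inverse M * f x \<le> g x" for x
    using assms(2) assms(3)[of x] by (simp add: field_simps)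
  ultimately show ?thesis
    by (blast intro: filterlim_at_top_mono always_eventually)
qed

definition window_max :: "nat \<Rightarrow> (nat \<Rightarrow> 'a::real_normed_vector) \<Rightarrow> nat \<Rightarrow> real" where
  "window_max d y k = (MAX j\<in>{..d}. norm (y (k + j)))"

lemma norm_le_window_max: "j \<le> d \<Longrightarrow> norm (y (k + j)) \<le> window_max d y k"
  unfolding window_max_def by (rule Max_ge) auto

lemma window_max_attained:
  obtains j where "j \<le> d" "window_max d y k = norm (y (k + j))"
proof -
  have "window_max d y k \<in> (\<lambda>j. norm (y (k + j))) ` {..d}"
    unfolding window_max_def by (rule Max_in) auto
  then show thesis using that by auto
qed

lemma window_max_of_real: "window_max d (\<lambda>k. of_real (f k) :: 'a::real_normed_algebra_1) = window_max d f"
  by (simp add: window_max_def fun_eq_iff)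

lemma filterlim_window_max_norm:
  assumes "filterlim (\<lambda>k. norm (y k)) at_top sequentially"
  shows "filterlim (window_max d y) at_top sequentially"
  using norm_le_window_max[of 0 d y]
  by (intro filterlim_at_top_mono[OF assms always_eventually]) simp

lemma filterlim_window_max_first_difference:
  fixes l :: complex
  assumes "filterlim (window_max d (\<lambda>k. y (Suc k) - l * y k)) at_top sequentially"
  shows "filterlim (window_max (Suc d) y) at_top sequentially"
proof (rule filterlim_at_top_scaled_bound[OF assms])
  show "0 < 1 + cmod l" by (simp add: add_pos_nonneg)
  fix k
  obtain j where "j \<le> d"
    and j: "window_max d (\<lambda>k. y (Suc k) - l * y k) k = cmod (y (Suc (k + j)) - l * y (k + j))"
    by (rule window_max_attained)
  have "cmod (y (Suc (k + j)) - l * y (k + j)) \<le> cmod (y (k + Suc j)) + cmod l * cmod (y (k + j))"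
    using norm_triangle_ineq4[of "y (Suc (k + j))" "l * y (k + j)"] by (simp add: norm_mult)
  also have "\<dots> \<le> window_max (Suc d) y k + cmod l * window_max (Suc d) y k"
    using \<open>j \<le> d\<close> by (intro add_mono mult_left_mono norm_le_window_max) auto
  finally show "window_max d (\<lambda>k. y (Suc k) - l * y k) k \<le> (1 + cmod l) * window_max (Suc d) y k"
    using j by (simp add: algebra_simps)
qed

text \<open>\<open>poly_shift p y\<close> is \<open>p(E) y\<close> for the shift operator \<open>(E y) k = y (k + 1)\<close>.\<close>

definition poly_shift :: "'a::comm_semiring_0 poly \<Rightarrow> (nat \<Rightarrow> 'a) \<Rightarrow> nat \<Rightarrow> 'a" where
  "poly_shift p y k = (\<Sum>i\<le>degree p. coeff p i * y (k + i))"

lemma poly_shift_altdef: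
  "degree p \<le> N \<Longrightarrow> poly_shift p y k = (\<Sum>i\<le>N. coeff p i * y (k + i))"
  unfolding poly_shift_def by (rule sum.mono_neutral_left) (auto simp: coeff_eq_0)

lemma poly_shift_linear_factor:
  fixes q :: "'a::comm_ring_1 poly"
  shows "poly_shift ([:-l, 1:] * q) y k = poly_shift q (\<lambda>k. y (Suc k) - l * y k) k"
proof -
  define d where "d = degree q"
  have "degree ([:-l, 1:] * q) \<le> Suc d"
    using degree_mult_le[of "[:-l, 1:]" q] by (simp add: d_def)
  then have "poly_shift ([:-l, 1:] * q) y k =
      (\<Sum>i\<le>Suc d. coeff (pCons 0 q) i * y (k + i)) - l * (\<Sum>i\<le>Suc d. coeff q i * y (k + i))"
    by (simp add: poly_shift_altdef sum_distrib_left sum_subtractf algebra_simps)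
  also have "(\<Sum>i\<le>Suc d. coeff (pCons 0 q) i * y (k + i)) = (\<Sum>i\<le>d. coeff q i * y (Suc (k + i)))"
    by (subst sum.atMost_Suc_shift) simp
  also have "(\<Sum>i\<le>Suc d. coeff q i * y (k + i)) = (\<Sum>i\<le>d. coeff q i * y (k + i))"
    by (simp add: d_def coeff_eq_0)
  finally show ?thesis
    by (simp add: poly_shift_def d_def sum_distrib_left sum_subtractf algebra_simps)
qed

lemma poly_shift_dichotomy:
  fixes p :: "complex poly"
  assumes "p \<noteq> 0" "\<And>k. poly_shift p y k = 0"
  shows "marginally_stable y \<or> filterlim (window_max (degree p) y) at_top sequentially"
  using assms
proof (induction "degree p" arbitrary: p y)
  case 0
  then have "coeff p 0 \<noteq> 0" by (metis leading_coeff_0_iff)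
  then have "y k = 0" for k
    using "0.prems"(2)[of k] by (simp add: poly_shift_def flip: "0.hyps")
  then show ?case using marginally_stable_geometric[of 0 0] by (simp add: fun_eq_iff)
next
  case (Suc n)
  then have "\<not> constant (poly p)" by (metis constant_degree nat.distinct(1))
  then obtain l where "poly p l = 0" using fundamental_theorem_of_algebra by blast
  then obtain q where p: "p = [:-l, 1:] * q" by (metis dvdE poly_eq_0_iff_dvd)
  with Suc.prems(1) have "q \<noteq> 0" by auto
  have "degree p = degree [:-l, 1:] + degree q"
    unfolding p by (rule degree_mult_eq) (use \<open>q \<noteq> 0\<close> in auto)
  with Suc.hyps(2) have "degree q = n" by simp
  define z where "z = (\<lambda>k. y (Suc k) - l * y k)"
  have "poly_shift q z k = 0" for k
    using Suc.prems(2)[of k] unfolding p poly_shift_linear_factor z_def .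
  with Suc.hyps(1) \<open>q \<noteq> 0\<close> \<open>degree q = n\<close>
  have "marginally_stable z \<or> filterlim (window_max n z) at_top sequentially" by blast
  then show ?case
  proof
    assume "marginally_stable z"
    then have "marginally_stable y \<or> filterlim (\<lambda>k. cmod (y k)) at_top sequentially"
      by (intro first_order_dichotomy[of y l z]) (simp add: z_def)
    then show ?case using filterlim_window_max_norm by blast
  next
    assume "filterlim (window_max n z) at_top sequentially"
    then have "filterlim (window_max (Suc n) y) at_top sequentially"
      unfolding z_def by (rule filterlim_window_max_first_difference)
    then show ?case by (simp flip: Suc.hyps(2))
  qed
qed

section \<open>Orbits of a matrix\<close>

lemma bounded_if_components_bounded_cart:
  fixes S :: "(real^'n) set"
  assumes "\<And>i. bounded ((\<lambda>x. x $ i) ` S)"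
  shows "bounded S"
proof -
  obtain B where B: "\<And>i x. x \<in> S \<Longrightarrow> \<bar>x $ i\<bar> \<le> B i"
    using assms by (simp add: bounded_iff) metis
  have "norm x \<le> (\<Sum>i\<in>UNIV. B i)" if "x \<in> S" for x
    using order_trans[OF norm_le_l1_cart sum_mono[OF B[OF that]]] .
  then show ?thesis by (auto simp: bounded_iff)
qed

lemma dependent_family_DIM:
  fixes v :: "nat \<Rightarrow> 'a::euclidean_space"
  obtains c where "\<exists>i\<le>DIM('a). c i \<noteq> 0" "(\<Sum>i\<le>DIM('a). c i *\<^sub>R v i) = 0"
proof (cases "inj_on v {..DIM('a)}")
  case True
  have "card (v ` {..DIM('a)}) > DIM('a)"
    by (simp add: card_image[OF True])
  then have "dependent (v ` {..DIM('a)})" using independent_bound by force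
  then obtain u where u: "\<exists>w\<in>v ` {..DIM('a)}. u w \<noteq> 0" "(\<Sum>w\<in>v ` {..DIM('a)}. u w *\<^sub>R w) = 0"
    using dependent_finite by blast
  show thesis
  proof (rule that[of "u \<circ> v"])
    show "\<exists>i\<le>DIM('a). (u \<circ> v) i \<noteq> 0" using u(1) by auto
    show "(\<Sum>i\<le>DIM('a). (u \<circ> v) i *\<^sub>R v i) = 0"
      using u(2) by (simp add: sum.reindex[OF True])
  qed
next
  case False
  then obtain i j where ij: "i \<le> DIM('a)" "j \<le> DIM('a)" "i \<noteq> j" "v i = v j"
    unfolding inj_on_def by auto
  define c where "c = (\<lambda>m. if m = i then 1 else if m = j then -1 else 0 :: real)"
  have "(\<Sum>m\<le>DIM('a). c m *\<^sub>R v m) = (\<Sum>m\<le>DIM('a). (if m = i then v i else 0) - (if m = j then v j else 0))"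
    by (rule sum.cong) (use ij in \<open>auto simp: c_def\<close>)
  also have "\<dots> = 0" using ij by (simp add: sum_subtractf)
  finally show thesis using ij by (intro that[of c]) (auto simp: c_def)
qed

lemma matpow_add: "matpow A (k + i) = matpow A k ** matpow A i"
  by (induction k) (auto simp: matrix_mul_assoc)

lemma orbit_linear_recurrence:
  fixes A :: "real^'n^'n" and \<xi> :: "real^'n"
  obtains N c where "\<exists>i\<le>N. c i \<noteq> 0" "\<And>k. (\<Sum>i\<le>N. c i *\<^sub>R (matpow A (k + i) *v \<xi>)) = 0"
proof -
  obtain c where c: "\<exists>i\<le>DIM(real^'n). c i \<noteq> 0" "(\<Sum>i\<le>DIM(real^'n). c i *\<^sub>R (matpow A i *v \<xi>)) = 0"
    by (rule dependent_family_DIM)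
  have "(\<Sum>i\<le>DIM(real^'n). c i *\<^sub>R (matpow A (k + i) *v \<xi>)) =
      matpow A k *v (\<Sum>i\<le>DIM(real^'n). c i *\<^sub>R (matpow A i *v \<xi>))" for k
    by (simp add: matpow_add matrix_vector_mul_assoc matrix_vector_mult_scaleR
        matrix_vector_right_distrib sum_distrib_left linear_sum[OF matrix_vector_mul_linear])
  with c show thesis using that by simp
qed

lemma orbit_component_recurrence:
  fixes A :: "real^'n^'n" and \<xi> :: "real^'n"
  obtains p :: "complex poly"
  where "p \<noteq> 0" "\<And>k. poly_shift p (\<lambda>k. of_real ((matpow A k *v \<xi>) $ m)) k = 0"
proof -
  obtain N c where c: "\<exists>i\<le>N. c i \<noteq> 0" "\<And>k. (\<Sum>i\<le>N. c i *\<^sub>R (matpow A (k + i) *v \<xi>)) = 0"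
    using orbit_linear_recurrence[of A \<xi>] by blast
  define p where "p = (\<Sum>i\<le>N. monom (complex_of_real (c i)) i)"
  have coeff_p: "coeff p i = (if i \<le> N then of_real (c i) else 0)" for i
    by (simp add: p_def coeff_sum coeff_monom)
  show thesis
  proof (rule that)
    show "p \<noteq> 0" using c(1) coeff_p by (metis coeff_0 of_real_eq_0_iff)
    have "degree p \<le> N" by (rule degree_le) (simp add: coeff_p)
    fix k
    have "poly_shift p (\<lambda>k. of_real ((matpow A k *v \<xi>) $ m)) k =
        of_real ((\<Sum>i\<le>N. c i *\<^sub>R (matpow A (k + i) *v \<xi>)) $ m)"
      using \<open>degree p \<le> N\<close> by (simp add: poly_shift_altdef coeff_p sum_component)
    then show "poly_shift p (\<lambda>k. of_real ((matpow A k *v \<xi>) $ m)) k = 0"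
      using c(2) by simp
  qed
qed

lemma filterlim_norm_orbit:
  fixes A :: "real^'n^'n" and \<xi> :: "real^'n"
  assumes "filterlim (window_max d (\<lambda>k. (matpow A k *v \<xi>) $ m)) at_top sequentially"
  shows "filterlim (\<lambda>k. norm (matpow A k *v \<xi>)) at_top sequentially"
proof -
  define M where "M = 1 + (\<Sum>j\<le>d. onorm ((*v) (matpow A j)))"
  have onorm_le_M: "onorm ((*v) (matpow A j)) \<le> M" if "j \<le> d" for j
    using that by (auto simp: M_def onorm_pos_le intro!: add_increasing member_le_sum)
  have "0 < M" unfolding M_def by (simp add: add_pos_nonneg sum_nonneg onorm_pos_le)
  moreover have "window_max d (\<lambda>k. (matpow A k *v \<xi>) $ m) k \<le> M * norm (matpow A k *v \<xi>)" for k
  proof -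
    obtain j where "j \<le> d" and j: "window_max d (\<lambda>k. (matpow A k *v \<xi>) $ m) k =
        norm ((matpow A (k + j) *v \<xi>) $ m)"
      by (rule window_max_attained)
    have "matpow A (k + j) *v \<xi> = matpow A j *v (matpow A k *v \<xi>)"
      using matpow_add[of A j k] by (simp add: add.commute matrix_vector_mul_assoc)
    then have "norm ((matpow A (k + j) *v \<xi>) $ m) \<le> norm (matpow A j *v (matpow A k *v \<xi>))"
      using component_le_norm_cart[of "matpow A (k + j) *v \<xi>" m] by simp
    also have "\<dots> \<le> onorm ((*v) (matpow A j)) * norm (matpow A k *v \<xi>)"
      by (rule onorm[OF matrix_vector_mul_bounded_linear])
    also have "\<dots> \<le> M * norm (matpow A k *v \<xi>)"
      using onorm_le_M[OF \<open>j \<le> d\<close>] by (rule mult_right_mono) simp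
    finally show ?thesis using j by simp
  qed
  ultimately show ?thesis by (rule filterlim_at_top_scaled_bound[OF assms])
qed

lemma filterlim_norm_eventually_outside_bounded:
  assumes "filterlim (\<lambda>k. norm (f k)) at_top sequentially" "bounded P"
  shows "\<exists>K>0. \<forall>k\<ge>K. f k \<notin> P"
proof -
  obtain R where R: "\<And>v. v \<in> P \<Longrightarrow> norm v \<le> R"
    using assms(2) by (auto simp: bounded_iff)
  obtain K where "\<And>k. k \<ge> K \<Longrightarrow> R < norm (f k)"
    using assms(1) by (auto simp: filterlim_at_top_dense eventually_sequentially)
  then have "\<forall>k\<ge>Suc K. f k \<notin> P"
    using R by (meson Suc_leD not_le)
  then show ?thesis by blast
qed

theorem lemma5:
  fixes A :: "real^'n^'n" and \<xi> :: "real^'n"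
  assumes "\<forall>P :: (real^'n) set. bounded P \<longrightarrow> (\<exists>k::nat. k > 0 \<and> matpow A k *v \<xi> \<notin> P)"
  shows "\<forall>P :: (real^'n) set. bounded P \<longrightarrow> (\<exists>K::nat. K > 0 \<and> (\<forall>k\<ge>K. matpow A k *v \<xi> \<notin> P))"
proof -
  define x where "x k = matpow A k *v \<xi>" for k
  have "\<not> bounded (range x)"
    using assms by (auto simp: x_def)
  then have "\<exists>m. \<not> bounded ((\<lambda>v. v $ m) ` range x)"
    using bounded_if_components_bounded_cart by blast
  then obtain m where "\<not> bounded (range (\<lambda>k. x k $ m))"
    by (auto simp: image_image)
  then have "\<not> bounded (range (\<lambda>k. complex_of_real (x k $ m)))"
    by (simp add: bounded_iff)
  then have "\<not> marginally_stable (\<lambda>k. of_real (x k $ m))"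
    using marginally_stable_bounded by blast
  moreover obtain p :: "complex poly" where "p \<noteq> 0" "\<And>k. poly_shift p (\<lambda>k. of_real (x k $ m)) k = 0"
    using orbit_component_recurrence[of A \<xi> m] unfolding x_def by blast
  ultimately have "filterlim (window_max (degree p) (\<lambda>k. complex_of_real (x k $ m))) at_top sequentially"
    using poly_shift_dichotomy by blast
  then have "filterlim (\<lambda>k. norm (x k)) at_top sequentially"
    unfolding x_def window_max_of_real by (rule filterlim_norm_orbit)
  then have "\<exists>K>0. \<forall>k\<ge>K. x k \<notin> P" if "bounded P" for P
    using that by (rule filterlim_norm_eventually_outside_bounded)
  then show ?thesis by (simp add: x_def)
qed

end
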